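(* Let $I$ be a finite index set of users. For each $i \in I$ let $p_i \in [0,1]$, $\Delta p_i \in \mathbb{R}$ with $p_i - \Delta p_i \in [0,1]$, and $a_i \in [0,1]$. Let $\mathrm{CPA} > 0$ and $\beta > 0$, and define $$J = \{ i \in I : \mathrm{CPA}\, p_i a_i > \beta \Delta p_i \}, \qquad K = \{ i \in I : \mathrm{CPA}\, p_i a_i < \beta \Delta p_i \}.$$ Assume it is not the case that $\mathrm{CPA}\, p_i a_i = \beta \Delta p_i$ for all $i \in I$. Suppose that $\sum_{j \in J} p_j a_j = \sum_{k \in K} p_k a_k$ and that this common value is positive. Define $$\mathscr{C}_1 = \frac{\sum_{j\in J} \beta \Delta p_j}{\sum_{j\in J} p_j a_j}, \qquad \mathscr{C}_2 = \frac{\sum_{k\in K} \mathrm{CPA}\, p_k a_k}{\sum_{k \in K} p_k a_k}.$$ Then $\mathscr{C}_1 < \mathscr{C}_2$.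
   Context: Interpretation (real-time bidding for online ads): each $i\in I$ indexes an ad request from a distinct user $u_i$; $p_i$ is the action rate if the advertiser's ad is shown, $p_i-\Delta p_i$ the background action rate if it is not shown, $\Delta p_i$ the AR lift, and $a_i$ the probability that an action from $u_i$ is attributed to the DSP that wins $u_i$. $\mathrm{CPA}$ is the advertiser's cost per action. In pure second-price auctions with no other candidates, $DSP_1$ bids $\mathrm{CPA}\, p_i a_i$ and $DSP_2$ bids $\beta\Delta p_i$; $DSP_1$ wins users in $J$ paying $\beta\Delta p_j$ each, $DSP_2$ wins users in $K$ paying $\mathrm{CPA}\,p_k a_k$ each. The expected attributed actions are $\sum_J p_j a_j$ and $\sum_K p_k a_k$ (assumed equal). $\mathscr{C}_1,\mathscr{C}_2$ are the costs per attributed action of $DSP_1$ and $DSP_2$. The excluded case is $a_i = \frac{\beta}{\mathrm{CPA}}\cdot\frac{\Delta p_i}{p_i}$ for all $i$, i.e. both DSPs always bid the same price. *)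

theory Defs
  imports Complex_Main
begin

end

theory Submission
  imports Defs
begin

text \<open>DSP_2 pays exactly its competitor's bid CPA p_k a_k on every user it wins, so its cost per
  attributed action is exactly CPA. DSP_1 pays \<beta> \<Delta>p_j, which is strictly below its own bid
  CPA p_j a_j on every user it wins; hence its cost per attributed action is strictly below CPA.\<close>

lemma sum_weighted_ratio_eq:
  fixes w :: "'a \<Rightarrow> real"
  assumes "sum w A \<noteq> 0"
  shows "(\<Sum>k\<in>A. c * w k) / sum w A = c"
  using assms by (simp add: sum_distrib_left[symmetric])

lemma sum_ratio_less_if_pointwise_less:
  fixes f w :: "'a \<Rightarrow> real"
  assumes "finite A" and "sum w A > 0" and "\<And>j. j \<in> A \<Longrightarrow> f j < c * w j"
  shows "sum f A / sum w A < c"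
proof -
  have "A \<noteq> {}" using assms(2) by auto
  then have "sum f A < (\<Sum>j\<in>A. c * w j)"
    by (rule sum_strict_mono[OF assms(1)]) (use assms(3) in auto)
  also have "\<dots> = c * sum w A" by (simp add: sum_distrib_left)
  finally show ?thesis using assms(2) by (simp add: divide_less_eq)
qed

theorem theorem4:
  fixes I :: "'u set" and p dp a :: "'u \<Rightarrow> real" and CPA \<beta> :: real
    and J K :: "'u set"
  assumes "finite I"
    and "\<And>i. i \<in> I \<Longrightarrow> 0 \<le> p i \<and> p i \<le> 1"
    and "\<And>i. i \<in> I \<Longrightarrow> 0 \<le> p i - dp i \<and> p i - dp i \<le> 1"
    and "\<And>i. i \<in> I \<Longrightarrow> 0 \<le> a i \<and> a i \<le> 1"
    and "CPA > 0" and "\<beta> > 0"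
    and J_def: "J = {i \<in> I. CPA * p i * a i > \<beta> * dp i}"
    and K_def: "K = {i \<in> I. CPA * p i * a i < \<beta> * dp i}"
    and "\<not> (\<forall>i\<in>I. CPA * p i * a i = \<beta> * dp i)"
    and "(\<Sum>j\<in>J. p j * a j) = (\<Sum>k\<in>K. p k * a k)"
    and "(\<Sum>j\<in>J. p j * a j) > 0"
  shows "(\<Sum>j\<in>J. \<beta> * dp j) / (\<Sum>j\<in>J. p j * a j)
         < (\<Sum>k\<in>K. CPA * p k * a k) / (\<Sum>k\<in>K. p k * a k)"
proof -
  have "finite J" using \<open>finite I\<close> J_def by simp
  moreover have "\<beta> * dp j < CPA * (p j * a j)" if "j \<in> J" for j
    using that J_def by (simp add: mult.assoc)
  ultimately have "(\<Sum>j\<in>J. \<beta> * dp j) / (\<Sum>j\<in>J. p j * a j) < CPA"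
    using assms(11) by (intro sum_ratio_less_if_pointwise_less)
  also have "CPA = (\<Sum>k\<in>K. CPA * (p k * a k)) / (\<Sum>k\<in>K. p k * a k)"
    using assms(10,11) by (intro sum_weighted_ratio_eq[symmetric]) simp
  also have "\<dots> = (\<Sum>k\<in>K. CPA * p k * a k) / (\<Sum>k\<in>K. p k * a k)"
    by (simp only: mult.assoc)
  finally show ?thesis .
qed

end
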